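(* For every prime power $q$ there exists an $[n,2]_q$ MWS code with $n=\frac{q(q+1)}{2}=\left\lceil\frac{q\,\theta_q(1)}{2}\right\rceil$; hence the lower bound $n\ge\lceil q\theta_q(k-1)/2\rceil$ for $[n,k]_q$ MWS codes with $k\ge2$ is attained when $k=2$.
   Context: An $[n,k]_q$ code is a $k$-dimensional subspace of $\mathbb{F}_q^n$, non-degenerate (no coordinate identically zero on the code). $\theta_q(m)=\frac{q^{m+1}-1}{q-1}$, so $\theta_q(1)=q+1$. The code is MWS if the set of its non-zero Hamming weights has cardinality $\theta_q(k-1)$. *)

theory Defs
  imports Complex_Main "HOL-Library.Cardinality"
begin

text \<open>Vectors of length n over a field are modelled as functions nat \<Rightarrow> 'a
  vanishing outside {0..<n}. A family of k vectors is g :: nat \<Rightarrow> nat \<Rightarrow> 'a,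
  with g j the j-th vector (j < k).\<close>

definition theta :: "nat \<Rightarrow> nat \<Rightarrow> nat" where
  "theta q m = (q ^ (m + 1) - 1) div (q - 1)"

definition lin_comb :: "nat \<Rightarrow> (nat \<Rightarrow> nat \<Rightarrow> 'a::field) \<Rightarrow> (nat \<Rightarrow> 'a) \<Rightarrow> (nat \<Rightarrow> 'a)" where
  "lin_comb k g c = (\<lambda>i. \<Sum>j<k. c j * g j i)"

definition lin_indep_fam :: "nat \<Rightarrow> (nat \<Rightarrow> nat \<Rightarrow> 'a::field) \<Rightarrow> bool" where
  "lin_indep_fam k g \<longleftrightarrow> (\<forall>c. lin_comb k g c = (\<lambda>_. 0) \<longrightarrow> (\<forall>j<k. c j = 0))"

definition span_fam :: "nat \<Rightarrow> (nat \<Rightarrow> nat \<Rightarrow> 'a::field) \<Rightarrow> (nat \<Rightarrow> 'a) set" where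
  "span_fam k g = {lin_comb k g c | c. True}"

definition is_code :: "nat \<Rightarrow> nat \<Rightarrow> (nat \<Rightarrow> 'a::field) set \<Rightarrow> bool" where
  "is_code n k C \<longleftrightarrow>
     (\<exists>g. (\<forall>j<k. \<forall>i\<ge>n. g j i = 0) \<and> lin_indep_fam k g \<and> C = span_fam k g)
     \<and> (\<forall>i<n. \<exists>v\<in>C. v i \<noteq> 0)"

definition hamming_wt :: "nat \<Rightarrow> (nat \<Rightarrow> 'a::zero) \<Rightarrow> nat" where
  "hamming_wt n v = card {i. i < n \<and> v i \<noteq> 0}"

definition is_MWS_code :: "nat \<Rightarrow> nat \<Rightarrow> (nat \<Rightarrow> 'a::{finite,field}) set \<Rightarrow> bool" where
  "is_MWS_code n k C \<longleftrightarrow> is_code n k C \<and>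
     card {hamming_wt n v | v. v \<in> C \<and> v \<noteq> (\<lambda>_. 0)} = theta (card (UNIV :: 'a set)) (k - 1)"

end

theory Submission
  imports Defs
begin

text \<open>Take the code spanned by the all-one word and a word whose coordinates list the field
  elements, each x repeated m(x) times. The codeword c0 + c1 col has full weight n
  if c1 = 0, and otherwise vanishes exactly where col = -c0/c1, so its weight is
  n - m(-c0/c1). Choosing the multiplicities m to be 1, 2, ..., q gives q + 1 = theta_q(1)
  distinct weights with n = 1 + 2 + ... + q = q(q+1)/2.\<close>

definition column_gen :: "nat \<Rightarrow> (nat \<Rightarrow> 'a::field) \<Rightarrow> nat \<Rightarrow> nat \<Rightarrow> 'a" where
  "column_gen n col = (\<lambda>j i. if i < n then if j = 0 then 1 else col i else 0)"

definition column_code :: "nat \<Rightarrow> (nat \<Rightarrow> 'a::field) \<Rightarrow> (nat \<Rightarrow> 'a) set" where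
  "column_code n col = span_fam 2 (column_gen n col)"

definition column_word :: "nat \<Rightarrow> (nat \<Rightarrow> 'a::field) \<Rightarrow> 'a \<Rightarrow> 'a \<Rightarrow> nat \<Rightarrow> 'a" where
  "column_word n col a b = (\<lambda>i. if i < n then a + b * col i else 0)"

definition multiplicity :: "nat \<Rightarrow> (nat \<Rightarrow> 'a) \<Rightarrow> 'a \<Rightarrow> nat" where
  "multiplicity n col x = card {i. i < n \<and> col i = x}"

lemma lin_comb_column_gen: "lin_comb 2 (column_gen n col) c = column_word n col (c 0) (c 1)"
  by (auto simp: lin_comb_def column_gen_def column_word_def numeral_2_eq_2)

lemma column_code_eq: "column_code n col = {column_word n col a b | a b. True}"
proof -
  have "\<exists>c. column_word n col a b = lin_comb 2 (column_gen n col) c" for a b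
    by (rule exI[where x = "\<lambda>j. if j = 0 then a else b"]) (simp add: lin_comb_column_gen)
  then show ?thesis
    unfolding column_code_def span_fam_def by (auto simp: lin_comb_column_gen)
qed

lemma column_word_eq_0_iff:
  assumes "col ` {..<n} = UNIV"
  shows "column_word n col a b = (\<lambda>_. 0) \<longleftrightarrow> a = 0 \<and> b = 0"
proof
  obtain i0 i1 where i: "i0 < n" "i1 < n" "col i0 = 0" "col i1 = 1"
    using assms by (metis UNIV_I imageE lessThan_iff)
  assume "column_word n col a b = (\<lambda>_. 0)"
  then have "column_word n col a b i0 = 0" "column_word n col a b i1 = 0" by simp_all
  with i show "a = 0 \<and> b = 0" by (simp add: column_word_def)
qed (simp add: column_word_def fun_eq_iff)

lemma hamming_wt_column_word_const: "a \<noteq> 0 \<Longrightarrow> hamming_wt n (column_word n col a 0) = n"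
  by (simp add: hamming_wt_def column_word_def)

lemma hamming_wt_column_word:
  assumes "b \<noteq> 0"
  shows "hamming_wt n (column_word n col a b) = n - multiplicity n col (- a / b)"
proof -
  have "a + b * y = 0 \<longleftrightarrow> y = - a / b" for y
    using assms by (auto simp: field_simps add_eq_0_iff2)
  then have support: "{i. i < n \<and> column_word n col a b i \<noteq> 0}
                       = {..<n} - {i. i < n \<and> col i = - a / b}"
    by (auto simp: column_word_def)
  show ?thesis
    unfolding hamming_wt_def multiplicity_def support by (subst card_Diff_subset) auto
qed

lemma column_code_is_code:
  assumes surj: "col ` {..<n} = UNIV"
  shows "is_code n 2 (column_code n col)"
  unfolding is_code_def
proof (intro conjI exI allI impI)
  show "lin_indep_fam 2 (column_gen n col)"
    using column_word_eq_0_iff[OF surj]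
    by (auto simp: lin_indep_fam_def lin_comb_column_gen less_2_cases_iff)
  show "\<exists>v\<in>column_code n col. v i \<noteq> 0" if "i < n" for i
    using that unfolding column_code_eq
    by (intro bexI[of _ "column_word n col 1 0"]) (auto simp: column_word_def)
qed (auto simp: column_gen_def column_code_def)

lemma column_code_weights:
  fixes col :: "nat \<Rightarrow> 'a::field"
  assumes surj: "col ` {..<n} = UNIV"
  shows "{hamming_wt n v | v. v \<in> column_code n col \<and> v \<noteq> (\<lambda>_. 0)}
           = insert n ((\<lambda>x. n - multiplicity n col x) ` UNIV)"
    (is "?W = ?V")
proof -
  let ?U = "{hamming_wt n (column_word n col a b) | a b. a \<noteq> 0 \<or> b \<noteq> 0}"
  have "?W = ?U"
    unfolding column_code_eq using column_word_eq_0_iff[OF surj] by blast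
  also have "?U = ?V"
  proof (intro equalityI subsetI)
    fix w assume "w \<in> ?U"
    then obtain a b where ab: "a \<noteq> 0 \<or> b \<noteq> 0" and w: "w = hamming_wt n (column_word n col a b)"
      by blast
    show "w \<in> ?V"
    proof (cases "b = 0")
      case True
      with ab w show ?thesis by (simp add: hamming_wt_column_word_const)
    next
      case False
      with w show ?thesis by (simp add: hamming_wt_column_word)
    qed
  next
    fix w assume "w \<in> ?V"
    then consider "w = n" | x where "w = n - multiplicity n col x" by blast
    then show "w \<in> ?U"
    proof cases
      case 1
      then have "w = hamming_wt n (column_word n col 1 0)"
        by (simp add: hamming_wt_column_word_const)
      then show ?thesis using one_neq_zero by blast
    next
      case 2
      then have "w = hamming_wt n (column_word n col (- x) 1)"
        by (simp add: hamming_wt_column_word)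
      then show ?thesis using one_neq_zero by blast
    qed
  qed
  finally show ?thesis .
qed

lemma card_field_ge_2: "CARD('a::{finite,field}) \<ge> 2"
proof -
  have "card {0::'a, 1} \<le> CARD('a)" by (rule card_mono) auto
  then show ?thesis by simp
qed

lemma theta_1:
  assumes "q \<ge> 2"
  shows "theta q 1 = q + 1"
proof -
  obtain r where q: "q = Suc r" and "r > 0"
    using assms by (cases q) auto
  have "q ^ 2 - 1 = (q + 1) * r"
    by (simp add: q power2_eq_square algebra_simps)
  with \<open>r > 0\<close> show ?thesis
    by (simp add: theta_def q)
qed

lemma column_code_is_MWS:
  fixes col :: "nat \<Rightarrow> 'a::{finite,field}"
  assumes inj: "inj (multiplicity n col)"
    and pos: "\<And>x. multiplicity n col x > 0"
  shows "is_MWS_code n 2 (column_code n col)"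
proof -
  have bounded: "multiplicity n col x \<le> n" for x
    unfolding multiplicity_def by (rule card_mono[of "{..<n}", simplified]) auto
  have "\<exists>i<n. col i = x" for x
    using pos[of x] unfolding multiplicity_def card_gt_0_iff by blast
  then have surj: "col ` {..<n} = UNIV" by (metis UNIV_eq_I image_iff lessThan_iff)
  have "inj (\<lambda>x. n - multiplicity n col x)"
  proof (rule injI)
    fix x y assume "n - multiplicity n col x = n - multiplicity n col y"
    with bounded[of x] bounded[of y] have "multiplicity n col x = multiplicity n col y" by linarith
    with inj show "x = y" by (simp add: inj_eq)
  qed
  moreover have "n \<notin> range (\<lambda>x. n - multiplicity n col x)"
  proof -
    have "n - multiplicity n col x < n" for x
      using pos[of x] bounded[of x] by linarith
    then show ?thesis by (metis less_irrefl rangeE)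
  qed
  ultimately have "card (insert n ((\<lambda>x. n - multiplicity n col x) ` UNIV)) = CARD('a) + 1"
    by (simp add: card_image)
  then show ?thesis
    unfolding is_MWS_code_def
    using column_code_is_code[OF surj] column_code_weights[OF surj]
      theta_1[OF card_field_ge_2[where 'a = 'a]] by simp
qed

lemma ex_sequence_with_multiplicities:
  fixes m :: "'b::finite \<Rightarrow> nat"
  obtains col :: "nat \<Rightarrow> 'b" where "multiplicity (\<Sum>x\<in>UNIV. m x) col = m"
proof -
  define S where "S = (SIGMA x:UNIV. {..<m x})"
  have card_S: "card S = (\<Sum>x\<in>UNIV. m x)" by (simp add: S_def)
  obtain h where h: "bij_betw h {0..<card S} S"
    using ex_bij_betw_nat_finite[of S] by (auto simp: S_def)
  have "multiplicity (card S) (\<lambda>i. fst (h i)) x = m x" for x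
  proof -
    have "bij_betw h {i \<in> {0..<card S}. fst (h i) = x} {p \<in> S. fst p = x}"
      using h by (rule bij_betw_Collect) simp
    then have "multiplicity (card S) (\<lambda>i. fst (h i)) x = card {p \<in> S. fst p = x}"
      unfolding multiplicity_def by (simp add: bij_betw_same_card)
    also have "{p \<in> S. fst p = x} = {x} \<times> {..<m x}" by (auto simp: S_def)
    finally show ?thesis by simp
  qed
  with card_S that show ?thesis by auto
qed

lemma ex_bij_betw_one_to_card:
  obtains m :: "'b::finite \<Rightarrow> nat" where "bij_betw m UNIV {1..CARD('b)}"
proof -
  obtain e :: "'b \<Rightarrow> nat" where "bij_betw e UNIV {0..<CARD('b)}"
    using ex_bij_betw_finite_nat[of "UNIV :: 'b set"] by auto
  moreover have "bij_betw Suc {0..<CARD('b)} {1..CARD('b)}"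
    by (simp add: bij_betw_Suc atLeastLessThanSuc_atLeastAtMost)
  ultimately show thesis
    using that bij_betw_trans by blast
qed

lemma even_nat_ceiling_half: "even m \<Longrightarrow> nat \<lceil>real m / 2\<rceil> = m div 2"
  by (auto simp: real_of_nat_div[symmetric])

theorem mainTheorem12:
  shows "(\<exists>C :: (nat \<Rightarrow> 'a::{finite,field}) set.
            is_MWS_code (CARD('a) * (CARD('a) + 1) div 2) 2 C)
         \<and> CARD('a) * (CARD('a) + 1) div 2
             = nat \<lceil>real (CARD('a) * theta CARD('a) 1) / 2\<rceil>"
proof
  obtain m :: "'a \<Rightarrow> nat" where m: "bij_betw m UNIV {1..CARD('a)}"
    by (rule ex_bij_betw_one_to_card)
  have n: "(\<Sum>x\<in>UNIV. m x) = CARD('a) * (CARD('a) + 1) div 2"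
    using sum.reindex_bij_betw[OF m, of id] gauss_sum_from_Suc_0[of "CARD('a)", where 'a = nat]
    by simp
  obtain col :: "nat \<Rightarrow> 'a" where "multiplicity (\<Sum>x\<in>UNIV. m x) col = m"
    by (rule ex_sequence_with_multiplicities)
  moreover have "inj m"
    using m by (simp add: bij_betw_def)
  moreover have "m x > 0" for x
    using bij_betw_apply[OF m, of x] by simp
  ultimately show "\<exists>C :: (nat \<Rightarrow> 'a) set. is_MWS_code (CARD('a) * (CARD('a) + 1) div 2) 2 C"
    using column_code_is_MWS[of "CARD('a) * (CARD('a) + 1) div 2" col] n by auto
next
  have "even (CARD('a) * (CARD('a) + 1))" by simp
  then show "CARD('a) * (CARD('a) + 1) div 2 = nat \<lceil>real (CARD('a) * theta CARD('a) 1) / 2\<rceil>"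
    unfolding theta_1[OF card_field_ge_2] by (rule even_nat_ceiling_half[symmetric])
qed

end
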